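(* Let $q\neq-1$ and $r$ be real parameters. Let $t$ be a tiling of an $n$-board with $k$ dominoes and $\ell$ black squares. Write $t$ as a word (read from left to right) in the letters $a$ (white square), $b$ (black square) and $D$ (domino). Let $T$ be the tiling whose word is obtained from that of $t$ by keeping every letter $a$ at its place in the word and writing the remaining letters (the $b$'s and $D$'s) in reverse order. Let $A$ be the tiling of the $n$-board obtained from $T$ by replacing every square (white or black) by a colourless square of weight $1$, and let $B$ be the tiling of the $(n-2k)$-board obtained from $T$ by deleting all dominoes. Then $$w_r(t)=q^{k\ell}\,w_r(A)\,w_r(B).$$
   Context: An $m$-board is a $1\times m$ rectangle with cells numbered $1,\dots,m$, tiled by white squares, black squares (each covering one cell) and dominoes (covering two adjacent cells); in $A$ also colourless squares occur. The weight $w_r$: a white square has weight $x$; a black square at cell $i$ has weight $q^i r x$; a domino covering cells $i-1,i$ has weight $q^{i-1}s$; a colourless square has weight $1$. The weight of a tiling is the product of the weights of its tiles. *)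

theory Defs
  imports Complex_Main
begin

text \<open>Tiles: white square (letter a), black square (letter b), domino (letter D),
  colourless square. A tiling of a board is the word of its tiles read left to right.\<close>
datatype tile = White | Black | Domino | Colourless

fun tile_len :: "tile \<Rightarrow> nat" where
  "tile_len Domino = 2"
| "tile_len _ = 1"

definition cells :: "tile list \<Rightarrow> nat" where
  "cells t = sum_list (map tile_len t)"

text \<open>weight_from q r s x i t: weight of the word t placed so that its first tile
  starts at cell i+1 (i cells already covered).\<close>
fun weight_from :: "real \<Rightarrow> real \<Rightarrow> real \<Rightarrow> real \<Rightarrow> nat \<Rightarrow> tile list \<Rightarrow> real" where
  "weight_from q r s x i [] = 1"
| "weight_from q r s x i (White # ts) = x * weight_from q r s x (i + 1) ts"
| "weight_from q r s x i (Black # ts) = q ^ (i + 1) * r * x * weight_from q r s x (i + 1) ts"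
| "weight_from q r s x i (Domino # ts) = q ^ (i + 1) * s * weight_from q r s x (i + 2) ts"
| "weight_from q r s x i (Colourless # ts) = weight_from q r s x (i + 1) ts"

definition w_r :: "real \<Rightarrow> real \<Rightarrow> real \<Rightarrow> real \<Rightarrow> tile list \<Rightarrow> real" where
  "w_r q r s x t = weight_from q r s x 0 t"

fun fill_nonwhite :: "tile list \<Rightarrow> tile list \<Rightarrow> tile list" where
  "fill_nonwhite [] ys = []"
| "fill_nonwhite (White # xs) ys = White # fill_nonwhite xs ys"
| "fill_nonwhite (c # xs) ys = hd ys # fill_nonwhite xs (tl ys)"

definition reverse_nonwhite :: "tile list \<Rightarrow> tile list" where
  "reverse_nonwhite t = fill_nonwhite t (rev (filter (\<lambda>c. c \<noteq> White) t))"

definition squares_to_colourless :: "tile list \<Rightarrow> tile list" where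
  "squares_to_colourless t = map (\<lambda>c. if c = Domino then Domino else Colourless) t"

definition delete_dominoes :: "tile list \<Rightarrow> tile list" where
  "delete_dominoes t = filter (\<lambda>c. c \<noteq> Domino) t"

end

theory Submission
  imports Defs
begin

text \<open>Every weight is a monomial x^(#a+#b) r^#b s^#D q^e, where e sums the starting cells of
  the black squares and dominoes, so only the exponents of q need comparing. If the
  non-white letters c_1..c_m of t sit at word positions p_1 < .. < p_m, then c_j starts at
  cell p_j plus the number of dominoes among c_1..c_{j-1}; hence e(t) = \<Sigma> p_j + DD + Db,
  counting ordered pairs (domino, domino) and (domino, black) in the letter sequence.
  In A a domino of T is shifted right by the earlier dominoes, in B a black square is
  shifted left by them, so e(A) + e(B) = \<Sigma> p_j + DD - Db', where Db' counts the pairs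
  (domino, black) of T, i.e. the pairs (black, domino) of t. As Db + Db' = k l, the
  exponents differ by exactly k l.\<close>

abbreviation nonwhite :: "tile list \<Rightarrow> tile list" where
  "nonwhite t \<equiv> filter (\<lambda>c. c \<noteq> White) t"

fun q_exponent :: "nat \<Rightarrow> tile list \<Rightarrow> nat" where
  "q_exponent i [] = 0"
| "q_exponent i (White # ts) = q_exponent (i + 1) ts"
| "q_exponent i (Black # ts) = (i + 1) + q_exponent (i + 1) ts"
| "q_exponent i (Domino # ts) = (i + 1) + q_exponent (i + 2) ts"
| "q_exponent i (Colourless # ts) = q_exponent (i + 1) ts"

fun nonwhite_index_sum :: "nat \<Rightarrow> tile list \<Rightarrow> nat" where
  "nonwhite_index_sum p [] = 0"
| "nonwhite_index_sum p (White # ts) = nonwhite_index_sum (p + 1) ts"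
| "nonwhite_index_sum p (c # ts) = (p + 1) + nonwhite_index_sum (p + 1) ts"

fun count_pairs :: "'a \<Rightarrow> 'a \<Rightarrow> 'a list \<Rightarrow> nat" where
  "count_pairs a b [] = 0"
| "count_pairs a b (x # xs) = (if x = a then count_list xs b else 0) + count_pairs a b xs"

lemma weight_from_eq_monomial:
  "weight_from q r s x i t =
     x ^ (count_list t White + count_list t Black) * r ^ count_list t Black
       * s ^ count_list t Domino * q ^ q_exponent i t"
proof (induction t arbitrary: i)
  case (Cons c ts)
  then show ?case by (cases c) (simp_all add: power_add algebra_simps)
qed simp

lemma count_pairs_snoc:
  "count_pairs a b (xs @ [y]) = count_pairs a b xs + (if y = b then count_list xs a else 0)"
  by (induction xs) auto

lemma count_pairs_rev: "count_pairs a b (rev xs) = count_pairs b a xs"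
  by (induction xs) (auto simp: count_pairs_snoc)

lemma count_pairs_add_swap:
  assumes "a \<noteq> b"
  shows "count_pairs a b xs + count_pairs b a xs = count_list xs a * count_list xs b"
  using assms by (induction xs) (auto simp: algebra_simps)

lemma length_eq_count_Black_Domino:
  "set ys \<subseteq> {Black, Domino} \<Longrightarrow> length ys = count_list ys Black + count_list ys Domino"
  by (induction ys) auto

lemma count_list_filter:
  "count_list (filter P xs) c = (if P c then count_list xs c else 0)"
  by (induction xs) auto

lemma fill_nonwhite_Cons_nonwhite:
  "c \<noteq> White \<Longrightarrow> fill_nonwhite (c # xs) (y # ys) = y # fill_nonwhite xs ys"
  by (cases c) auto

lemma fill_nonwhite_nonwhite: "fill_nonwhite t (nonwhite t) = t"
  by (induction t) (auto simp: fill_nonwhite_Cons_nonwhite)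

lemma count_list_fill_nonwhite:
  assumes "White \<notin> set ys" and "length ys = length (nonwhite t)"
  shows "count_list (fill_nonwhite t ys) c = (if c = White then count_list t White else count_list ys c)"
  using assms
proof (induction t arbitrary: ys)
  case (Cons a ts)
  show ?case
  proof (cases "a = White")
    case False
    with Cons.prems obtain y ys' where "ys = y # ys'" by (cases ys) auto
    with False Cons.prems Cons.IH[of ys'] show ?thesis
      by (auto simp: fill_nonwhite_Cons_nonwhite)
  qed (use Cons in auto)
qed simp

lemma count_list_squares_to_colourless:
  "c \<noteq> Colourless \<Longrightarrow>
     count_list (squares_to_colourless t) c = (if c = Domino then count_list t Domino else 0)"
  by (induction t) (auto simp: squares_to_colourless_def)

lemma count_list_delete_dominoes:
  "count_list (delete_dominoes t) c = (if c = Domino then 0 else count_list t c)"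
  by (induction t) (auto simp: delete_dominoes_def)

text \<open>The offset p + d of the tiling is the word offset p plus d cells for the d dominoes
  already placed.\<close>
lemma q_exponent_fill_nonwhite:
  assumes "set ys \<subseteq> {Black, Domino}" and "length ys = length (nonwhite t)"
  shows "q_exponent (p + d) (fill_nonwhite t ys) =
           nonwhite_index_sum p t + d * length ys
             + count_pairs Domino Black ys + count_pairs Domino Domino ys"
  using assms
proof (induction t arbitrary: ys p d)
  case (Cons c ts)
  show ?case
  proof (cases "c = White")
    case True
    with Cons show ?thesis using Cons.IH[of ys "p + 1" d] by simp
  next
    case False
    with Cons.prems obtain y ys' where ys: "ys = y # ys'" by (cases ys) auto
    with Cons.prems have y: "y = Black \<or> y = Domino" and ys': "set ys' \<subseteq> {Black, Domino}" by auto
    from ys Cons.prems False have len: "length ys' = length (nonwhite ts)" by (cases c) auto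
    have "nonwhite_index_sum p (c # ts) = (p + 1) + nonwhite_index_sum (p + 1) ts"
      using False by (cases c) auto
    with y ys len Cons.IH[OF ys' len, of "p + 1" "d + (if y = Domino then 1 else 0)"]
      length_eq_count_Black_Domino[OF ys'] False
    show ?thesis by (auto simp: fill_nonwhite_Cons_nonwhite algebra_simps)
  qed
qed simp

text \<open>Here d dominoes precede: they shift A by 2 d cells and B by none relative to the
  word offset j + d.\<close>
lemma q_exponent_split_fill_nonwhite:
  assumes "set ys \<subseteq> {Black, Domino}" and "length ys = length (nonwhite t)"
  shows "q_exponent (j + 2 * d) (squares_to_colourless (fill_nonwhite t ys))
           + q_exponent j (delete_dominoes (fill_nonwhite t ys))
           + d * count_list ys Black + count_pairs Domino Black ys
         = nonwhite_index_sum (j + d) t + d * count_list ys Domino + count_pairs Domino Domino ys"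
  using assms
proof (induction t arbitrary: ys j d)
  case Nil
  then show ?case by (simp add: squares_to_colourless_def delete_dominoes_def)
next
  case (Cons c ts)
  show ?case
  proof (cases "c = White")
    case True
    with Cons show ?thesis using Cons.IH[of ys "j + 1" d]
      by (simp add: squares_to_colourless_def delete_dominoes_def)
  next
    case False
    with Cons.prems obtain y ys' where ys: "ys = y # ys'" by (cases ys) auto
    with Cons.prems have y: "y = Black \<or> y = Domino" and ys': "set ys' \<subseteq> {Black, Domino}" by auto
    from ys Cons.prems False have len: "length ys' = length (nonwhite ts)" by (cases c) auto
    have "nonwhite_index_sum (j + d) (c # ts) = (j + d + 1) + nonwhite_index_sum (j + d + 1) ts"
      using False by (cases c) auto
    with False y ys Cons.IH[OF ys' len, of "j + 1" d] Cons.IH[OF ys' len, of j "d + 1"]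
    show ?thesis
      by (auto simp: fill_nonwhite_Cons_nonwhite squares_to_colourless_def delete_dominoes_def
          algebra_simps)
  qed
qed

lemma q_exponent_reverse_nonwhite:
  assumes "set t \<subseteq> {White, Black, Domino}"
  shows "q_exponent 0 t =
           count_list t Domino * count_list t Black
             + q_exponent 0 (squares_to_colourless (reverse_nonwhite t))
             + q_exponent 0 (delete_dominoes (reverse_nonwhite t))"
proof -
  let ?w = "nonwhite t"
  have w: "set ?w \<subseteq> {Black, Domino}" and rev_w: "set (rev ?w) \<subseteq> {Black, Domino}"
    using assms by auto
  have "q_exponent 0 t = nonwhite_index_sum 0 t + count_pairs Domino Black ?w + count_pairs Domino Domino ?w"
    using q_exponent_fill_nonwhite[OF w, of t 0 0] by (simp add: fill_nonwhite_nonwhite)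
  moreover have "q_exponent 0 (squares_to_colourless (reverse_nonwhite t))
      + q_exponent 0 (delete_dominoes (reverse_nonwhite t)) + count_pairs Black Domino ?w
      = nonwhite_index_sum 0 t + count_pairs Domino Domino ?w"
    using q_exponent_split_fill_nonwhite[OF rev_w, of t 0 0]
    by (simp add: reverse_nonwhite_def count_pairs_rev)
  moreover have "count_pairs Black Domino ?w + count_pairs Domino Black ?w
      = count_list t Domino * count_list t Black"
    using count_pairs_add_swap[of Black Domino ?w] by (simp add: count_list_filter)
  ultimately show ?thesis by linarith
qed

theorem proposition2p4:
  fixes q r s x :: real and t :: "tile list" and n k l :: nat
  assumes "q \<noteq> -1"
    and "set t \<subseteq> {White, Black, Domino}"
    and "cells t = n"
    and "count_list t Domino = k"
    and "count_list t Black = l"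
  shows "w_r q r s x t =
           q ^ (k * l) * w_r q r s x (squares_to_colourless (reverse_nonwhite t))
                       * w_r q r s x (delete_dominoes (reverse_nonwhite t))"
proof -
  have "count_list (reverse_nonwhite t) c = count_list t c" for c
    unfolding reverse_nonwhite_def
    by (subst count_list_fill_nonwhite) (auto simp: count_list_filter)
  then show ?thesis
    unfolding w_r_def weight_from_eq_monomial q_exponent_reverse_nonwhite[OF assms(2)]
    using assms(4,5)
    by (simp add: count_list_squares_to_colourless count_list_delete_dominoes power_add algebra_simps)
qed

end
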